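(* Let $\lambda\in\{1,2\}$ and let $S:\mathbb A^{(\lambda)}_{\rm triv}(\mathbb D^2)\to\mathbb A^{(\lambda)}_{\rm sign}(\mathbb D^2)$ be defined by $Sf=J_{\boldsymbol s}f$, where $J_{\boldsymbol s}(z_1,z_2)=z_1-z_2$. Then $S$ does not have a bounded inverse.
   Context: $\mathbb A^{(2)}(\mathbb D^2)$ is the Bergman space of $\mathbb D^2$ (holomorphic functions with reproducing kernel $\prod_{i=1}^2(1-z_i\bar w_i)^{-2}$, in which $\|z_1^{a}z_2^{b}\|^2=\frac{a!\,b!}{(2)_a(2)_b}$), and $\mathbb A^{(1)}(\mathbb D^2)=H^2(\mathbb D^2)$ is the Hardy space (kernel $\prod_i(1-z_i\bar w_i)^{-1}$). $\mathbb A^{(\lambda)}_{\rm triv}(\mathbb D^2)$ is the subspace of symmetric functions $f(z_1,z_2)=f(z_2,z_1)$, and $\mathbb A^{(\lambda)}_{\rm sign}(\mathbb D^2)$ the subspace of antisymmetric functions $f(z_1,z_2)=-f(z_2,z_1)$. $J_{\boldsymbol s}$ is the Jacobian determinant of the symmetrization map $(z_1+z_2,z_1z_2)$. *)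

theory Defs
  imports "HOL-Analysis.Analysis"
begin

text \<open>Functions on the bidisc are modelled as maps complex => complex => complex
  which vanish outside the open bidisc (extensional convention).
  The space A^(lam)(D^2) consists of those functions given on the bidisc by a
  double power series sum c a b z1^a z2^b whose coefficients satisfy
  sum |c a b|^2 * ||z1^a z2^b||^2 < infinity, with
  ||z1^a z2^b||^2 = a! b! / ((lam)_a (lam)_b).\<close>

definition bidisc :: "(complex \<times> complex) set" where
  "bidisc = {(z1, z2). norm z1 < 1 \<and> norm z2 < 1}"

definition mono_weight :: "nat \<Rightarrow> nat \<Rightarrow> nat \<Rightarrow> real" where
  "mono_weight lam a b =
     fact a * fact b / (pochhammer (real lam) a * pochhammer (real lam) b)"

definition is_coeffs :: "nat \<Rightarrow> (complex \<Rightarrow> complex \<Rightarrow> complex) \<Rightarrow> (nat \<Rightarrow> nat \<Rightarrow> complex) \<Rightarrow> bool" where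
  "is_coeffs lam f c \<longleftrightarrow>
     (\<lambda>(a, b). (norm (c a b))\<^sup>2 * mono_weight lam a b) summable_on (UNIV :: (nat \<times> nat) set)
   \<and> (\<forall>z1 z2. (z1, z2) \<in> bidisc \<longrightarrow>
          ((\<lambda>(a, b). c a b * z1 ^ a * z2 ^ b) has_sum f z1 z2) (UNIV :: (nat \<times> nat) set))"

definition A_space :: "nat \<Rightarrow> (complex \<Rightarrow> complex \<Rightarrow> complex) set" where
  "A_space lam = {f. (\<exists>c. is_coeffs lam f c) \<and> (\<forall>z1 z2. (z1, z2) \<notin> bidisc \<longrightarrow> f z1 z2 = 0)}"

definition A_coeffs :: "nat \<Rightarrow> (complex \<Rightarrow> complex \<Rightarrow> complex) \<Rightarrow> nat \<Rightarrow> nat \<Rightarrow> complex" where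
  "A_coeffs lam f = (THE c. is_coeffs lam f c)"

definition A_norm :: "nat \<Rightarrow> (complex \<Rightarrow> complex \<Rightarrow> complex) \<Rightarrow> real" where
  "A_norm lam f = sqrt (\<Sum>\<^sub>\<infinity>(a, b)\<in>UNIV. (norm (A_coeffs lam f a b))\<^sup>2 * mono_weight lam a b)"

definition A_triv :: "nat \<Rightarrow> (complex \<Rightarrow> complex \<Rightarrow> complex) set" where
  "A_triv lam = {f \<in> A_space lam. \<forall>z1 z2. f z1 z2 = f z2 z1}"

definition A_sign :: "nat \<Rightarrow> (complex \<Rightarrow> complex \<Rightarrow> complex) set" where
  "A_sign lam = {f \<in> A_space lam. \<forall>z1 z2. f z1 z2 = - f z2 z1}"

text \<open>Jacobian of the symmetrisation map (z1+z2, z1 z2).\<close>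
definition J_s :: "complex \<Rightarrow> complex \<Rightarrow> complex" where
  "J_s z1 z2 = z1 - z2"

definition S_op :: "(complex \<Rightarrow> complex \<Rightarrow> complex) \<Rightarrow> complex \<Rightarrow> complex \<Rightarrow> complex" where
  "S_op f = (\<lambda>z1 z2. J_s z1 z2 * f z1 z2)"

end

theory Submission
  imports Defs "HOL-Real_Asymp.Real_Asymp"
begin

text \<open>The complete homogeneous polynomial h_n = \<Sum>k\<le>n. z1^k z2^(n-k) is symmetric and
  (z1 - z2) h_n = z1^(n+1) - z2^(n+1). Since the monomials are orthogonal, ||h_n||^2 is the
  sum of the n+1 weights of degree n, while ||S h_n||^2 consists of only two weights of
  degree n+1. In the Hardy space the ratio ||h_n||^2 / ||S h_n||^2 is (n+1)/2, in the Bergman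
  space it is the harmonic number H_(n+1); both are unbounded, so no estimate
  ||f|| \<le> C ||S f|| can hold.\<close>

lemma power_series_eq_zero_imp_coeff_zero:
  fixes a :: "nat \<Rightarrow> complex"
  assumes zero: "\<And>z. norm z < 1 \<Longrightarrow> ((\<lambda>n. a n * z ^ n) has_sum 0) UNIV"
  shows "a n = 0"
proof -
  have sums: "(\<lambda>n. a n * z ^ n) sums 0" if "norm z < 1" for z
    using zero[OF that] by (rule has_sum_imp_sums)
  have "1 \<le> conv_radius a"
  proof (rule conv_radius_geI_ex')
    fix r :: real
    assume "0 < r" "ereal r < 1"
    then show "summable (\<lambda>n. a n * of_real r ^ n)"
      by (intro sums_summable[OF sums]) simp
  qed
  then have radius: "fps_conv_radius (Abs_fps a) > 0"
    by (simp add: fps_conv_radius_def) (rule less_le_trans[of 0 1], simp_all)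
  have "eventually (\<lambda>z. z \<in> ball 0 1) (nhds (0 :: complex))"
    by (intro eventually_nhds_in_open) auto
  then have "eventually (\<lambda>z. eval_fps (Abs_fps a) z = eval_fps 0 z) (nhds 0)"
    by eventually_elim (simp add: eval_fps_def sums_unique[OF sums, symmetric])
  then have "Abs_fps a = 0"
    using radius by (intro eval_fps_eqD) auto
  then show ?thesis
    by (metis fps_nth_Abs_fps fps_zero_nth)
qed

lemma double_power_series_eq_zero_imp_coeff_zero:
  fixes e :: "nat \<Rightarrow> nat \<Rightarrow> complex"
  assumes zero: "\<And>z1 z2. norm z1 < 1 \<Longrightarrow> norm z2 < 1 \<Longrightarrow>
      ((\<lambda>(a, b). e a b * z1 ^ a * z2 ^ b) has_sum 0) UNIV"
  shows "e a b = 0"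
proof -
  have row_summable: "(\<lambda>b. e a b * z2 ^ b) summable_on UNIV" if "norm z2 < 1" for a z2
  proof -
    have "(\<lambda>(a, b). e a b * (1/2) ^ a * z2 ^ b) summable_on Sigma UNIV (\<lambda>_. UNIV)"
      using has_sum_imp_summable[OF zero[of "1/2" z2]] that by simp
    from summable_on_SigmaD1[OF this, of a]
    have "(\<lambda>b. (1/2) ^ a * (e a b * z2 ^ b)) summable_on UNIV"
      by (simp add: algebra_simps)
    then show ?thesis
      using summable_on_cmult_right'[of "(1/2) ^ a" "\<lambda>b. e a b * z2 ^ b" UNIV] by simp
  qed
  define row where "row z2 a = (\<Sum>\<^sub>\<infinity>b. e a b * z2 ^ b)" for z2 a
  have row_zero: "row z2 a = 0" if z2: "norm z2 < 1" for z2 a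
  proof (rule power_series_eq_zero_imp_coeff_zero[of "row z2"])
    fix z1 :: complex
    assume z1: "norm z1 < 1"
    have "((\<lambda>a. z1 ^ a * row z2 a) has_sum 0) UNIV"
    proof (rule has_sum_Sigma'[where f = "\<lambda>(a, b). e a b * z1 ^ a * z2 ^ b"])
      show "((\<lambda>(a, b). e a b * z1 ^ a * z2 ^ b) has_sum 0) (Sigma UNIV (\<lambda>_. UNIV))"
        using zero[OF z1 z2] by simp
    next
      fix a
      have "((\<lambda>b. z1 ^ a * (e a b * z2 ^ b)) has_sum z1 ^ a * row z2 a) UNIV"
        unfolding row_def using row_summable[OF z2] by (intro has_sum_cmult_right has_sum_infsum)
      then show "((\<lambda>b. (\<lambda>(a, b). e a b * z1 ^ a * z2 ^ b) (a, b))
          has_sum z1 ^ a * row z2 a) UNIV"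
        by (simp add: algebra_simps)
    qed
    then show "((\<lambda>a. row z2 a * z1 ^ a) has_sum 0) UNIV"
      by (simp add: mult.commute)
  qed
  show ?thesis
  proof (rule power_series_eq_zero_imp_coeff_zero[of "e a"])
    fix z2 :: complex
    assume z2: "norm z2 < 1"
    show "((\<lambda>b. e a b * z2 ^ b) has_sum 0) UNIV"
      using has_sum_infsum[OF row_summable[OF z2]] row_zero[OF z2] by (simp add: row_def)
  qed
qed

lemma is_coeffs_unique:
  assumes "is_coeffs lam f c" and "is_coeffs lam f d"
  shows "c = d"
proof -
  have "c a b - d a b = 0" for a b
  proof (rule double_power_series_eq_zero_imp_coeff_zero[where e = "\<lambda>a b. c a b - d a b"])
    fix z1 z2 :: complex
    assume "norm z1 < 1" "norm z2 < 1"
    then have "(z1, z2) \<in> bidisc"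
      by (simp add: bidisc_def)
    then have c: "((\<lambda>(a, b). c a b * z1 ^ a * z2 ^ b) has_sum f z1 z2) UNIV"
      and d: "((\<lambda>(a, b). d a b * z1 ^ a * z2 ^ b) has_sum f z1 z2) UNIV"
      using assms by (auto simp: is_coeffs_def)
    from has_sum_add[OF c has_sum_uminusI[OF d]]
    show "((\<lambda>(a, b). (c a b - d a b) * z1 ^ a * z2 ^ b) has_sum 0) UNIV"
      by (simp add: case_prod_beta' left_diff_distrib)
  qed
  then show ?thesis
    by (auto simp: fun_eq_iff)
qed

lemma A_spaceI:
  assumes "is_coeffs lam f c" and "\<And>z1 z2. (z1, z2) \<notin> bidisc \<Longrightarrow> f z1 z2 = 0"
  shows "f \<in> A_space lam"
  unfolding A_space_def using assms by blast

lemma A_coeffs_eqI: "is_coeffs lam f c \<Longrightarrow> A_coeffs lam f = c"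
  unfolding A_coeffs_def using is_coeffs_unique by blast

lemma mono_weight_nonneg: "0 \<le> mono_weight lam a b"
  unfolding mono_weight_def pochhammer_prod
  by (intro divide_nonneg_nonneg mult_nonneg_nonneg prod_nonneg) auto

lemma mono_weight_pos:
  assumes "0 < lam"
  shows "0 < mono_weight lam a b"
  unfolding mono_weight_def using assms by (intro divide_pos_pos mult_pos_pos pochhammer_pos) auto

lemma A_norm_nonneg: "0 \<le> A_norm lam f"
  unfolding A_norm_def by (intro real_sqrt_ge_zero infsum_nonneg) (auto simp: mono_weight_nonneg)

lemma A_norm_squared:
  assumes "is_coeffs lam f c"
  shows "(A_norm lam f)\<^sup>2 = (\<Sum>\<^sub>\<infinity>(a, b)\<in>UNIV. (norm (c a b))\<^sup>2 * mono_weight lam a b)"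
proof -
  have "0 \<le> (\<Sum>\<^sub>\<infinity>(a, b)\<in>UNIV. (norm (c a b))\<^sup>2 * mono_weight lam a b)"
    by (rule infsum_nonneg) (auto simp: mono_weight_nonneg)
  then show ?thesis
    unfolding A_norm_def A_coeffs_eqI[OF assms] by simp
qed

context
  fixes F :: "(nat \<times> nat) set" and c :: "nat \<Rightarrow> nat \<Rightarrow> complex"
    and f :: "complex \<Rightarrow> complex \<Rightarrow> complex"
  assumes finite_support: "finite F"
    and coeffs_outside: "\<And>a b. (a, b) \<notin> F \<Longrightarrow> c a b = 0"
    and polynomial_on_bidisc:
      "\<And>z1 z2. (z1, z2) \<in> bidisc \<Longrightarrow> f z1 z2 = (\<Sum>(a, b)\<in>F. c a b * z1 ^ a * z2 ^ b)"
begin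

lemma has_sum_over_support:
  assumes "\<And>a b. c a b = 0 \<Longrightarrow> g (a, b) = 0"
  shows "(g has_sum (\<Sum>x\<in>F. g x)) UNIV"
proof (rule has_sum_finite_neutralI[OF finite_support])
  fix x
  assume "x \<in> UNIV - F"
  then show "g x = 0"
    using coeffs_outside assms by (cases x) simp
qed simp_all

lemma is_coeffs_polynomial: "is_coeffs lam f c"
  unfolding is_coeffs_def
proof (intro conjI allI impI)
  show "(\<lambda>(a, b). (norm (c a b))\<^sup>2 * mono_weight lam a b) summable_on UNIV"
    by (rule has_sum_imp_summable, rule has_sum_over_support) simp
  fix z1 z2
  assume "(z1, z2) \<in> bidisc"
  show "((\<lambda>(a, b). c a b * z1 ^ a * z2 ^ b) has_sum f z1 z2) UNIV"
    unfolding polynomial_on_bidisc[OF \<open>(z1, z2) \<in> bidisc\<close>]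
    by (rule has_sum_over_support) simp
qed

lemma A_norm_polynomial_squared:
  "(A_norm lam f)\<^sup>2 = (\<Sum>(a, b)\<in>F. (norm (c a b))\<^sup>2 * mono_weight lam a b)"
proof -
  have "((\<lambda>(a, b). (norm (c a b))\<^sup>2 * mono_weight lam a b)
      has_sum (\<Sum>(a, b)\<in>F. (norm (c a b))\<^sup>2 * mono_weight lam a b)) UNIV"
    by (rule has_sum_over_support) simp
  then show ?thesis
    unfolding A_norm_squared[OF is_coeffs_polynomial] by (rule infsumI)
qed

end

lemma no_inverse_bound_if_norm_ratio_unbounded:
  fixes u :: "nat \<Rightarrow> complex \<Rightarrow> complex \<Rightarrow> complex" and \<rho> :: "nat \<Rightarrow> real"
  assumes "\<And>n. u n \<in> A_triv lam"
    and "\<And>n. A_norm lam (S_op (u n)) \<noteq> 0"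
    and "\<And>n. (A_norm lam (u n))\<^sup>2 = \<rho> n * (A_norm lam (S_op (u n)))\<^sup>2"
    and "filterlim \<rho> at_top sequentially"
  shows "\<not> (\<exists>C. \<forall>f \<in> A_triv lam. A_norm lam f \<le> C * A_norm lam (S_op f))"
proof
  assume "\<exists>C. \<forall>f \<in> A_triv lam. A_norm lam f \<le> C * A_norm lam (S_op f)"
  then obtain C where C: "\<And>f. f \<in> A_triv lam \<Longrightarrow> A_norm lam f \<le> C * A_norm lam (S_op f)"
    by blast
  from assms(4) obtain n where large: "C\<^sup>2 < \<rho> n"
    by (auto simp: filterlim_at_top_dense eventually_sequentially)
  have "\<rho> n * (A_norm lam (S_op (u n)))\<^sup>2 = (A_norm lam (u n))\<^sup>2"
    using assms(3) by simp
  also have "\<dots> \<le> (C * A_norm lam (S_op (u n)))\<^sup>2"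
    using C[OF assms(1)] A_norm_nonneg by (rule power_mono)
  also have "\<dots> = C\<^sup>2 * (A_norm lam (S_op (u n)))\<^sup>2"
    by (simp add: power_mult_distrib)
  finally have "\<rho> n \<le> C\<^sup>2"
    using assms(2) by simp
  with large show False
    by simp
qed

lemma mono_weight_Hardy: "mono_weight 1 a b = 1"
  by (simp add: mono_weight_def pochhammer_fact[symmetric])

lemma pochhammer_two: "pochhammer (2 :: real) a = fact (Suc a)"
  by (induction a) (auto simp: pochhammer_Suc algebra_simps)

lemma mono_weight_Bergman: "mono_weight 2 a b = 1 / ((real a + 1) * (real b + 1))"
proof -
  have "mono_weight 2 a b
      = (fact a * fact b) / ((fact a * fact b) * ((real a + 1) * (real b + 1)))"
    by (simp add: mono_weight_def pochhammer_two algebra_simps)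
  then show ?thesis
    by simp
qed

lemma sum_inverse_products_eq_harm:
  "(\<Sum>k\<le>n. 1 / ((real k + 1) * (real (n - k) + 1))) = 2 * harm (Suc n) / (real n + 2)"
proof -
  have partial_fractions: "1 / ((real k + 1) * (real (n - k) + 1))
      = (1 / (real k + 1) + 1 / (real (n - k) + 1)) / (real n + 2)" if "k \<le> n" for k
  proof -
    obtain m where "n = k + m"
      using le_Suc_ex[OF \<open>k \<le> n\<close>] by blast
    then show ?thesis
      by (simp add: divide_simps)
  qed
  have reflect: "(\<Sum>k\<le>n. 1 / (real (n - k) + 1)) = (\<Sum>k\<le>n. 1 / (real k + 1))"
    by (rule sum.reindex_bij_witness[where i = "\<lambda>k. n - k" and j = "\<lambda>k. n - k"]) auto
  have harm: "(\<Sum>k\<le>n. 1 / (real k + 1)) = harm (Suc n)"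
    by (simp add: harm_altdef lessThan_Suc_atMost inverse_eq_divide add.commute)
  have "(\<Sum>k\<le>n. 1 / ((real k + 1) * (real (n - k) + 1)))
      = (\<Sum>k\<le>n. (1 / (real k + 1) + 1 / (real (n - k) + 1)) / (real n + 2))"
    by (intro sum.cong refl partial_fractions) simp
  also have "\<dots> = ((\<Sum>k\<le>n. 1 / (real k + 1)) + (\<Sum>k\<le>n. 1 / (real (n - k) + 1))) / (real n + 2)"
    by (simp only: sum_divide_distrib[symmetric] sum.distrib)
  also have "\<dots> = 2 * harm (Suc n) / (real n + 2)"
    by (simp only: reflect harm) simp
  finally show ?thesis .
qed

definition complete_homogeneous :: "nat \<Rightarrow> complex \<Rightarrow> complex \<Rightarrow> complex" where
  "complete_homogeneous n z1 z2 =
     (if (z1, z2) \<in> bidisc then \<Sum>k\<le>n. z1 ^ k * z2 ^ (n - k) else 0)"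

lemma complete_homogeneous_commute:
  "complete_homogeneous n z1 z2 = complete_homogeneous n z2 z1"
proof -
  have "(\<Sum>k\<le>n. z1 ^ k * z2 ^ (n - k)) = (\<Sum>k\<le>n. z2 ^ k * z1 ^ (n - k))"
    by (rule sum.reindex_bij_witness[where i = "\<lambda>k. n - k" and j = "\<lambda>k. n - k"])
      (auto simp: mult.commute)
  moreover have "(z1, z2) \<in> bidisc \<longleftrightarrow> (z2, z1) \<in> bidisc"
    by (auto simp: bidisc_def)
  ultimately show ?thesis
    by (simp add: complete_homogeneous_def)
qed

lemma sum_antidiagonal:
  fixes n :: nat
  shows "(\<Sum>(a, b)\<in>(\<lambda>k. (k, n - k)) ` {..n}. g a b) = (\<Sum>k\<le>n. g k (n - k))"
  by (subst sum.reindex) (auto simp: inj_on_def)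

lemma of_bool_outside_antidiagonal:
  fixes a b n :: nat
  shows "(a, b) \<notin> (\<lambda>k. (k, n - k)) ` {..n} \<Longrightarrow> (of_bool (a + b = n) :: complex) = 0"
  by (auto simp: image_iff)

lemma complete_homogeneous_on_bidisc:
  assumes "(z1, z2) \<in> bidisc"
  shows "complete_homogeneous n z1 z2
    = (\<Sum>(a, b)\<in>(\<lambda>k. (k, n - k)) ` {..n}. of_bool (a + b = n) * z1 ^ a * z2 ^ b)"
  using assms by (simp add: sum_antidiagonal complete_homogeneous_def)

lemmas polynomial_complete_homogeneous =
  finite_imageI[OF finite_atMost] of_bool_outside_antidiagonal complete_homogeneous_on_bidisc

lemma complete_homogeneous_in_A_triv: "complete_homogeneous n \<in> A_triv lam"
proof -
  have "complete_homogeneous n \<in> A_space lam"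
  proof (rule A_spaceI[OF is_coeffs_polynomial[OF polynomial_complete_homogeneous]])
    fix z1 z2
    assume "(z1, z2) \<notin> bidisc"
    then show "complete_homogeneous n z1 z2 = 0"
      unfolding complete_homogeneous_def by simp
  qed
  then show ?thesis
    unfolding A_triv_def using complete_homogeneous_commute by blast
qed

lemma A_norm_complete_homogeneous:
  "(A_norm lam (complete_homogeneous n))\<^sup>2 = (\<Sum>k\<le>n. mono_weight lam k (n - k))"
proof -
  have "(A_norm lam (complete_homogeneous n))\<^sup>2 = (\<Sum>(a, b)\<in>(\<lambda>k. (k, n - k)) ` {..n}.
      (norm (of_bool (a + b = n) :: complex))\<^sup>2 * mono_weight lam a b)"
    by (rule A_norm_polynomial_squared[OF polynomial_complete_homogeneous])
  then show ?thesis
    by (simp add: sum_antidiagonal)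
qed

lemma S_op_complete_homogeneous:
  assumes "(z1, z2) \<in> bidisc"
  shows "S_op (complete_homogeneous n) z1 z2 = z1 ^ Suc n - z2 ^ Suc n"
proof -
  have "S_op (complete_homogeneous n) z1 z2
      = (z1 - z2) * (\<Sum>i<Suc n. z2 ^ (Suc n - Suc i) * z1 ^ i)"
    using assms
    by (simp add: S_op_def J_s_def complete_homogeneous_def lessThan_Suc_atMost mult.commute)
  also have "\<dots> = z1 ^ Suc n - z2 ^ Suc n"
    by (rule power_diff_sumr2[symmetric])
  finally show ?thesis .
qed

lemma A_norm_S_op_complete_homogeneous:
  "(A_norm lam (S_op (complete_homogeneous n)))\<^sup>2
    = mono_weight lam (Suc n) 0 + mono_weight lam 0 (Suc n)"
proof -
  define c :: "nat \<Rightarrow> nat \<Rightarrow> complex"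
    where "c a b = of_bool ((a, b) = (Suc n, 0)) - of_bool ((a, b) = (0, Suc n))" for a b
  have "(A_norm lam (S_op (complete_homogeneous n)))\<^sup>2
      = (\<Sum>(a, b)\<in>{(Suc n, 0), (0, Suc n)}. (norm (c a b))\<^sup>2 * mono_weight lam a b)"
    by (rule A_norm_polynomial_squared) (auto simp: c_def S_op_complete_homogeneous)
  then show ?thesis
    by (simp add: c_def)
qed

lemma A_norm_S_op_complete_homogeneous_nonzero:
  assumes "0 < lam"
  shows "A_norm lam (S_op (complete_homogeneous n)) \<noteq> 0"
  using A_norm_S_op_complete_homogeneous[of lam n] mono_weight_pos[OF assms]
  by (metis add_pos_pos power_zero_numeral less_irrefl)

lemma Hardy_norm_ratio:
  "(A_norm 1 (complete_homogeneous n))\<^sup>2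
    = (real n + 1) / 2 * (A_norm 1 (S_op (complete_homogeneous n)))\<^sup>2"
  unfolding A_norm_complete_homogeneous A_norm_S_op_complete_homogeneous mono_weight_Hardy
  by simp

lemma Bergman_norm_ratio:
  "(A_norm 2 (complete_homogeneous n))\<^sup>2
    = harm (Suc n) * (A_norm 2 (S_op (complete_homogeneous n)))\<^sup>2"
  unfolding A_norm_complete_homogeneous A_norm_S_op_complete_homogeneous mono_weight_Bergman
    sum_inverse_products_eq_harm
  by (simp add: field_simps)

theorem proposition4p21:
  fixes lam :: nat
  assumes "lam \<in> {1, 2}"
  shows "\<not> (\<exists>C::real. \<forall>f \<in> A_triv lam. A_norm lam f \<le> C * A_norm lam (S_op f))"
proof -
  have pos: "0 < lam"
    using assms by auto
  from assms consider "lam = 1" | "lam = 2"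
    by blast
  then obtain \<rho> :: "nat \<Rightarrow> real"
    where "\<And>n. (A_norm lam (complete_homogeneous n))\<^sup>2
             = \<rho> n * (A_norm lam (S_op (complete_homogeneous n)))\<^sup>2"
      and "filterlim \<rho> at_top sequentially"
  proof cases
    case 1
    have "filterlim (\<lambda>n. (real n + 1) / 2) at_top sequentially"
      by real_asymp
    with Hardy_norm_ratio show ?thesis
      by (rule that[unfolded 1])
  next
    case 2
    have "filterlim (\<lambda>n. harm (Suc n) :: real) at_top sequentially"
      using filterlim_sequentially_Suc harm_at_top by blast
    with Bergman_norm_ratio show ?thesis
      by (rule that[unfolded 2])
  qed
  with complete_homogeneous_in_A_triv A_norm_S_op_complete_homogeneous_nonzero[OF pos]
  show ?thesis
    by (rule no_inverse_bound_if_norm_ratio_unbounded)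
qed

end
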